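(* Let $M\subset\mathbb{R}^2$ be open with coordinates $(x,u)$, let $M^{(1)}$ be the first-order jet space with coordinates $(x,u,u_x)$, and consider the ODE $u_{xx}=\phi(x,u,u_x)$ with associated vector field $\mathbf{A}=\partial_x+u_x\partial_u+\phi\,\partial_{u_x}$. Let $(\partial_u,\lambda_1)$ and $(\partial_u,\lambda_2)$ be the canonical representatives of two non-equivalent generalized $\mathcal{C}^\infty$-symmetries of this ODE (so $\lambda_1\neq\lambda_2$), put $\mathbf{X}_i=\partial_u+\lambda_i\partial_{u_x}$ ($i=1,2$) and $$\rho=\frac{\mathbf{X}_1(\lambda_2)-\mathbf{X}_2(\lambda_1)}{\lambda_1-\lambda_2}.$$ If $f_1=f_1(x,u,u_x)$ and $f_2=f_2(x,u,u_x)$ are functions such that $$\frac{\mathbf{X}_1(f_2)}{f_2}=\frac{\mathbf{X}_2(f_1)}{f_1}=\rho,$$ then $$[f_1\mathbf{X}_1,\mathbf{A}]=\rho_1 (f_1\mathbf{X}_1),\qquad [f_2\mathbf{X}_2,\mathbf{A}]=\rho_2 (f_2\mathbf{X}_2),\qquad [f_1\mathbf{X}_1,f_2\mathbf{X}_2]=0,$$ where $\rho_i=\lambda_i-\mathbf{A}(f_i)/f_i$ for $i=1,2$.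
   Context: All functions are smooth on $M^{(1)}$ and all statements are local, on an open set where the functions appearing in denominators ($\lambda_1-\lambda_2$, $f_1$, $f_2$) do not vanish. For smooth $\xi,\eta,\lambda$ on $M^{(1)}$ and $\mathbf{v}=\xi\partial_x+\eta\partial_u$, the $\lambda$-prolongation is $\mathbf{v}^{[\lambda,(1)]}=\mathbf{v}+\big((\mathbf{A}+\lambda)(\eta)-(\mathbf{A}+\lambda)(\xi)u_x\big)\partial_{u_x}$. The pair $(\mathbf{v},\lambda)$ is a generalized $\mathcal{C}^\infty$-symmetry (generalized $\lambda$-symmetry) of the ODE if $[\mathbf{v}^{[\lambda,(1)]},\mathbf{A}]=\lambda\,\mathbf{v}^{[\lambda,(1)]}+\mu\mathbf{A}$ with $\mu=-(\mathbf{A}+\lambda)(\xi)$. Two generalized $\mathcal{C}^\infty$-symmetries $(\mathbf{v}_1,\lambda_1)$, $(\mathbf{v}_2,\lambda_2)$ are $\mathbf{A}$-equivalent if $\{\mathbf{A},\mathbf{v}_1^{[\lambda_1,(1)]},\mathbf{v}_2^{[\lambda_2,(1)]}\}$ is linearly dependent over $C^\infty(M^{(1)})$. If $Q=\eta-\xi u_x$ is the characteristic of $\mathbf{v}$, the canonical representative of the equivalence class of $(\mathbf{v},\lambda)$ is the pair $(\partial_u,\lambda+\mathbf{A}(Q)/Q)$; in particular $(\partial_u,\lambda)$ is a generalized $\mathcal{C}^\infty$-symmetry iff $[\partial_u+\lambda\partial_{u_x},\mathbf{A}]=\lambda(\partial_u+\lambda\partial_{u_x})$. *)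

theory Defs
  imports "HOL-Analysis.Analysis"
begin

text \<open>Points of the jet space M^(1) are triples (x, u, u_x).
  Vector fields are triples of component functions w.r.t. the coordinate
  fields d/dx, d/du, d/du_x.\<close>

type_synonym pt = "real \<times> real \<times> real"
type_synonym fn = "pt \<Rightarrow> real"
type_synonym vf = "fn \<times> fn \<times> fn"

text \<open>Partial derivative in the i-th coordinate (0: x, 1: u, 2: u_x).\<close>
definition pd :: "nat \<Rightarrow> fn \<Rightarrow> fn" where
  "pd i f = (\<lambda>(x, u, ux).
     if i = 0 then deriv (\<lambda>t. f (t, u, ux)) x
     else if i = 1 then deriv (\<lambda>t. f (x, t, ux)) u
     else deriv (\<lambda>t. f (x, u, t)) ux)"

fun iterpd :: "nat list \<Rightarrow> fn \<Rightarrow> fn" where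
  "iterpd [] f = f"
| "iterpd (i # ds) f = pd i (iterpd ds f)"

definition smooth_on :: "pt set \<Rightarrow> fn \<Rightarrow> bool" where
  "smooth_on U f \<longleftrightarrow> (\<forall>ds. iterpd ds f differentiable_on U)"

definition vapp :: "vf \<Rightarrow> fn \<Rightarrow> fn" where
  "vapp V f = (case V of (a, b, c) \<Rightarrow>
     (\<lambda>p. a p * pd 0 f p + b p * pd 1 f p + c p * pd 2 f p))"

definition lie :: "vf \<Rightarrow> vf \<Rightarrow> vf" where
  "lie V W = (case V of (a, b, c) \<Rightarrow> case W of (a', b', c') \<Rightarrow>
     (\<lambda>p. vapp V a' p - vapp W a p,
      \<lambda>p. vapp V b' p - vapp W b p,
      \<lambda>p. vapp V c' p - vapp W c p))"

definition fscale :: "fn \<Rightarrow> vf \<Rightarrow> vf" where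
  "fscale g V = (case V of (a, b, c) \<Rightarrow>
     (\<lambda>p. g p * a p, \<lambda>p. g p * b p, \<lambda>p. g p * c p))"

definition vadd :: "vf \<Rightarrow> vf \<Rightarrow> vf" where
  "vadd V W = (case V of (a, b, c) \<Rightarrow> case W of (a', b', c') \<Rightarrow>
     (\<lambda>p. a p + a' p, \<lambda>p. b p + b' p, \<lambda>p. c p + c' p))"

definition vf_eq_on :: "pt set \<Rightarrow> vf \<Rightarrow> vf \<Rightarrow> bool" where
  "vf_eq_on U V W \<longleftrightarrow> (\<forall>p\<in>U. fst V p = fst W p \<and> fst (snd V) p = fst (snd W) p
                                \<and> snd (snd V) p = snd (snd W) p)"

definition Afield :: "fn \<Rightarrow> vf" where
  "Afield phi = (\<lambda>_. 1, \<lambda>(x, u, ux). ux, phi)"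

definition Xfield :: "fn \<Rightarrow> vf" where
  "Xfield lam = (\<lambda>_. 0, \<lambda>_. 1, lam)"

definition Aplus :: "fn \<Rightarrow> fn \<Rightarrow> fn \<Rightarrow> fn" where
  "Aplus phi lam f = (\<lambda>p. vapp (Afield phi) f p + lam p * f p)"

definition lam_prolong :: "fn \<Rightarrow> fn \<Rightarrow> fn \<Rightarrow> fn \<Rightarrow> vf" where
  "lam_prolong phi xi eta lam =
     (xi, eta, \<lambda>(x, u, ux). Aplus phi lam eta (x, u, ux) - Aplus phi lam xi (x, u, ux) * ux)"

definition gen_Cinf_sym :: "pt set \<Rightarrow> fn \<Rightarrow> fn \<Rightarrow> fn \<Rightarrow> fn \<Rightarrow> bool" where
  "gen_Cinf_sym U phi xi eta lam \<longleftrightarrow>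
     vf_eq_on U (lie (lam_prolong phi xi eta lam) (Afield phi))
       (vadd (fscale lam (lam_prolong phi xi eta lam))
             (fscale (\<lambda>p. - Aplus phi lam xi p) (Afield phi)))"

definition A_equiv :: "pt set \<Rightarrow> fn \<Rightarrow> fn \<Rightarrow> fn \<Rightarrow> fn \<Rightarrow> fn \<Rightarrow> fn \<Rightarrow> fn \<Rightarrow> bool" where
  "A_equiv U phi xi1 eta1 lam1 xi2 eta2 lam2 \<longleftrightarrow>
     (\<exists>a b c. smooth_on U a \<and> smooth_on U b \<and> smooth_on U c \<and>
        (\<exists>p\<in>U. a p \<noteq> 0 \<or> b p \<noteq> 0 \<or> c p \<noteq> 0) \<and>
        vf_eq_on U (vadd (fscale a (Afield phi))
                     (vadd (fscale b (lam_prolong phi xi1 eta1 lam1))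
                           (fscale c (lam_prolong phi xi2 eta2 lam2))))
                   (\<lambda>_. 0, \<lambda>_. 0, \<lambda>_. 0))"

end

theory Submission
  imports Defs
begin

text \<open>For the canonical representative \<open>(\<partial>\<^sub>u, \<lambda>)\<close> the symmetry condition reduces to the
  scalar equation \<open>X(\<phi>) - A(\<lambda>) = \<lambda>\<^sup>2\<close>, which is exactly what makes
  \<open>[fX, A] = (\<lambda> - A(f)/f) fX\<close> hold componentwise.  For the commutator,
  \<open>[f\<^sub>1X\<^sub>1, f\<^sub>2X\<^sub>2] = f\<^sub>1X\<^sub>1(f\<^sub>2) X\<^sub>2 - f\<^sub>2X\<^sub>2(f\<^sub>1) X\<^sub>1 + f\<^sub>1f\<^sub>2 (X\<^sub>1(\<lambda>\<^sub>2) - X\<^sub>2(\<lambda>\<^sub>1)) \<partial>\<^sub>u\<^sub>x\<close>; with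
  \<open>X\<^sub>1(f\<^sub>2) = \<rho> f\<^sub>2\<close>, \<open>X\<^sub>2(f\<^sub>1) = \<rho> f\<^sub>1\<close> the first two terms give \<open>\<rho> f\<^sub>1f\<^sub>2 (\<lambda>\<^sub>2 - \<lambda>\<^sub>1) \<partial>\<^sub>u\<^sub>x\<close>,
  which the definition of \<open>\<rho>\<close> cancels against the last.\<close>

lemma differentiable_imp_field_differentiable_slices:
  fixes f :: fn
  assumes "f differentiable (at p)"
  shows "(\<lambda>t. f (t, fst (snd p), snd (snd p))) field_differentiable at (fst p)"
    and "(\<lambda>t. f (fst p, t, snd (snd p))) field_differentiable at (fst (snd p))"
    and "(\<lambda>t. f (fst p, fst (snd p), t)) field_differentiable at (snd (snd p))"
  by (rule differentiable_compose[where f = f, THEN real_differentiable_def[THEN iffD1],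
        unfolded field_differentiable_def[symmetric]];
      use assms in \<open>auto intro!: derivative_intros\<close>)+

lemma pd_mult:
  assumes "f differentiable (at p)" and "g differentiable (at p)"
  shows "pd i (\<lambda>q. f q * g q) p = f p * pd i g p + pd i f p * g p"
  using differentiable_imp_field_differentiable_slices[OF assms(1)]
    differentiable_imp_field_differentiable_slices[OF assms(2)]
  by (cases p) (simp add: pd_def)

lemma pd_const: "pd i (\<lambda>q. c) p = 0"
  by (cases p) (simp add: pd_def)

lemma pd_fiber_coordinate:
  "pd 0 (\<lambda>(x, u, ux). ux) p = 0"
  "pd (Suc 0) (\<lambda>(x, u, ux). ux) p = 0"
  "pd 2 (\<lambda>(x, u, ux). ux) p = 1"
  by (cases p; simp add: pd_def)+

lemma smooth_on_imp_differentiable: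
  "smooth_on U f \<Longrightarrow> open U \<Longrightarrow> p \<in> U \<Longrightarrow> f differentiable (at p)"
  unfolding smooth_on_def
  by (metis iterpd.simps(1) differentiable_on_def at_within_open)

lemma lam_prolong_partial_u: "lam_prolong phi (\<lambda>_. 0) (\<lambda>_. 1) lam = Xfield lam"
  by (auto simp: lam_prolong_def Xfield_def Aplus_def vapp_def Afield_def pd_const)

lemma gen_Cinf_sym_partial_u_condition:
  assumes "gen_Cinf_sym U phi (\<lambda>_. 0) (\<lambda>_. 1) lam" and "p \<in> U"
  shows "vapp (Xfield lam) phi p - vapp (Afield phi) lam p = lam p * lam p"
  using assms unfolding gen_Cinf_sym_def lam_prolong_partial_u vf_eq_on_def
  by (auto simp: lie_def vadd_def fscale_def Xfield_def Afield_def Aplus_def vapp_def pd_const)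

lemma lie_scaled_Xfield_Afield:
  assumes "open U" and "smooth_on U lam" and "smooth_on U f"
    and "gen_Cinf_sym U phi (\<lambda>_. 0) (\<lambda>_. 1) lam" and "\<forall>p\<in>U. f p \<noteq> 0"
  shows "vf_eq_on U (lie (fscale f (Xfield lam)) (Afield phi))
           (fscale (\<lambda>p. lam p - vapp (Afield phi) f p / f p) (fscale f (Xfield lam)))"
  unfolding vf_eq_on_def
proof
  fix p assume "p \<in> U"
  have f_nonzero: "f p \<noteq> 0"
    using assms(5) \<open>p \<in> U\<close> by blast
  have "vapp (Xfield lam) phi p - vapp (Afield phi) lam p = lam p * lam p"
    using gen_Cinf_sym_partial_u_condition[OF assms(4) \<open>p \<in> U\<close>] .
  then have phi_u: "pd (Suc 0) phi p = lam p * lam p + vapp (Afield phi) lam p - lam p * pd 2 phi p"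
    by (simp add: vapp_def Xfield_def algebra_simps)
  show "fst (lie (fscale f (Xfield lam)) (Afield phi)) p
          = fst (fscale (\<lambda>p. lam p - vapp (Afield phi) f p / f p) (fscale f (Xfield lam))) p \<and>
        fst (snd (lie (fscale f (Xfield lam)) (Afield phi))) p
          = fst (snd (fscale (\<lambda>p. lam p - vapp (Afield phi) f p / f p) (fscale f (Xfield lam)))) p \<and>
        snd (snd (lie (fscale f (Xfield lam)) (Afield phi))) p
          = snd (snd (fscale (\<lambda>p. lam p - vapp (Afield phi) f p / f p) (fscale f (Xfield lam)))) p"
    using f_nonzero smooth_on_imp_differentiable[OF assms(3) assms(1) \<open>p \<in> U\<close>]
      smooth_on_imp_differentiable[OF assms(2) assms(1) \<open>p \<in> U\<close>]
    by (simp add: lie_def fscale_def Xfield_def vapp_def Afield_def pd_const pd_fiber_coordinate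
        pd_mult phi_u case_prod_beta field_simps)
qed

lemma lie_scaled_Xfields_eq_zero:
  assumes "open U" and "smooth_on U lam1" and "smooth_on U lam2"
    and "smooth_on U f1" and "smooth_on U f2"
    and "\<forall>p\<in>U. vapp (Xfield lam1) f2 p = rho p * f2 p"
    and "\<forall>p\<in>U. vapp (Xfield lam2) f1 p = rho p * f1 p"
    and "\<forall>p\<in>U. vapp (Xfield lam1) lam2 p - vapp (Xfield lam2) lam1 p = rho p * (lam1 p - lam2 p)"
  shows "vf_eq_on U (lie (fscale f1 (Xfield lam1)) (fscale f2 (Xfield lam2))) (\<lambda>_. 0, \<lambda>_. 0, \<lambda>_. 0)"
  unfolding vf_eq_on_def
proof
  fix p assume "p \<in> U"
  have f2_u: "pd (Suc 0) f2 p = rho p * f2 p - lam1 p * pd 2 f2 p"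
    using assms(6) \<open>p \<in> U\<close> by (simp add: vapp_def Xfield_def algebra_simps)
  have f1_u: "pd (Suc 0) f1 p = rho p * f1 p - lam2 p * pd 2 f1 p"
    using assms(7) \<open>p \<in> U\<close> by (simp add: vapp_def Xfield_def algebra_simps)
  have lam2_u: "pd (Suc 0) lam2 p = rho p * (lam1 p - lam2 p) + pd (Suc 0) lam1 p
                  + lam2 p * pd 2 lam1 p - lam1 p * pd 2 lam2 p"
    using assms(8) \<open>p \<in> U\<close> by (simp add: vapp_def Xfield_def algebra_simps)
  show "fst (lie (fscale f1 (Xfield lam1)) (fscale f2 (Xfield lam2))) p = fst (\<lambda>_. 0, \<lambda>_. 0, \<lambda>_. 0::real) p \<and>
        fst (snd (lie (fscale f1 (Xfield lam1)) (fscale f2 (Xfield lam2)))) p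
          = fst (snd (\<lambda>_. 0, \<lambda>_. 0, \<lambda>_. 0::real)) p \<and>
        snd (snd (lie (fscale f1 (Xfield lam1)) (fscale f2 (Xfield lam2)))) p
          = snd (snd (\<lambda>_. 0, \<lambda>_. 0, \<lambda>_. 0::real)) p"
    using smooth_on_imp_differentiable[OF _ assms(1) \<open>p \<in> U\<close>] assms(2-5)
    by (simp add: lie_def fscale_def Xfield_def vapp_def pd_const pd_mult f1_u f2_u lam2_u
        algebra_simps)
qed

text \<open>Non-equivalence of the two symmetries is used only through \<open>\<lambda>\<^sub>1 \<noteq> \<lambda>\<^sub>2\<close> on \<open>U\<close>,
  which is assumed separately.\<close>

theorem lemma1:
  fixes U :: "pt set" and phi lam1 lam2 f1 f2 :: fn
  assumes "open U"
    and "smooth_on U phi" and "smooth_on U lam1" and "smooth_on U lam2"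
    and "smooth_on U f1" and "smooth_on U f2"
    and "gen_Cinf_sym U phi (\<lambda>_. 0) (\<lambda>_. 1) lam1"
    and "gen_Cinf_sym U phi (\<lambda>_. 0) (\<lambda>_. 1) lam2"
    and "\<not> A_equiv U phi (\<lambda>_. 0) (\<lambda>_. 1) lam1 (\<lambda>_. 0) (\<lambda>_. 1) lam2"
    and "\<forall>p\<in>U. lam1 p \<noteq> lam2 p"
    and "\<forall>p\<in>U. f1 p \<noteq> 0" and "\<forall>p\<in>U. f2 p \<noteq> 0"
    and "rho = (\<lambda>p. (vapp (Xfield lam1) lam2 p - vapp (Xfield lam2) lam1 p) / (lam1 p - lam2 p))"
    and "\<forall>p\<in>U. vapp (Xfield lam1) f2 p / f2 p = rho p"
    and "\<forall>p\<in>U. vapp (Xfield lam2) f1 p / f1 p = rho p"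
    and "rho1 = (\<lambda>p. lam1 p - vapp (Afield phi) f1 p / f1 p)"
    and "rho2 = (\<lambda>p. lam2 p - vapp (Afield phi) f2 p / f2 p)"
  shows "vf_eq_on U (lie (fscale f1 (Xfield lam1)) (Afield phi)) (fscale rho1 (fscale f1 (Xfield lam1)))
       \<and> vf_eq_on U (lie (fscale f2 (Xfield lam2)) (Afield phi)) (fscale rho2 (fscale f2 (Xfield lam2)))
       \<and> vf_eq_on U (lie (fscale f1 (Xfield lam1)) (fscale f2 (Xfield lam2))) (\<lambda>_. 0, \<lambda>_. 0, \<lambda>_. 0)"
proof -
  have "\<forall>p\<in>U. vapp (Xfield lam1) f2 p = rho p * f2 p"
    using assms(12,14) by (metis nonzero_eq_divide_eq)
  moreover have "\<forall>p\<in>U. vapp (Xfield lam2) f1 p = rho p * f1 p"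
    using assms(11,15) by (metis nonzero_eq_divide_eq)
  moreover have "\<forall>p\<in>U. vapp (Xfield lam1) lam2 p - vapp (Xfield lam2) lam1 p = rho p * (lam1 p - lam2 p)"
    using assms(10,13) by simp
  ultimately show ?thesis
    using lie_scaled_Xfields_eq_zero[OF assms(1,3,4,5,6)]
      lie_scaled_Xfield_Afield[OF assms(1,3,5,7,11), folded assms(16)]
      lie_scaled_Xfield_Afield[OF assms(1,4,6,8,12), folded assms(17)]
    by blast
qed

end
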